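(* Let $X$ be a $W$-space (for example, a realcompact space). Then the strong dual of $C_k(X)$ has a fundamental bounded resolution if and only if $X$ has a fundamental compact resolution.
   Context: $C_k(X)$ is the space of continuous real-valued functions on the Tychonoff space $X$ with the compact-open topology; its strong dual carries the topology of uniform convergence on bounded subsets of $C_k(X)$. A subset $A\subseteq X$ is $b$-bounding if for every bounded subset $B$ of $C_k(X)$, $\sup\{|f(x)|:x\in A,f\in B\}<\infty$; $X$ is a $W$-space if every $b$-bounding subset of $X$ is relatively compact. Order $\mathbb{N}^{\mathbb{N}}$ pointwise. A resolution is a family $\{A_\alpha:\alpha\in\mathbb{N}^{\mathbb{N}}\}$ covering the space with $A_\alpha\subseteq A_\beta$ for $\alpha\le\beta$. A fundamental compact resolution of $X$ is a resolution of compact sets such that every compact subset of $X$ lies in some member; a fundamental bounded resolution of a locally convex space is a resolution of bounded sets such that every bounded set lies in some member. *)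

theory Defs
  imports "HOL-Analysis.Analysis"
begin

definition tychonoff_space :: "'a topology \<Rightarrow> bool" where
  "tychonoff_space X \<longleftrightarrow> Hausdorff_space X \<and> completely_regular_space X"

text \<open>Carrier of C(X): continuous real functions on X (extensional: 0 outside the carrier).\<close>
definition Cfun :: "'a topology \<Rightarrow> ('a \<Rightarrow> real) set" where
  "Cfun X = {f. continuous_map X euclideanreal f \<and> (\<forall>x. x \<notin> topspace X \<longrightarrow> f x = 0)}"

text \<open>Bounded subsets of C_k(X): the compact-open topology on C(X) is the locally convex
  topology of the seminorms sup over K of |f|, K compact; a set is bounded iff each seminorm
  is bounded on it.\<close>
definition ck_bounded :: "'a topology \<Rightarrow> ('a \<Rightarrow> real) set \<Rightarrow> bool" where
  "ck_bounded X B \<longleftrightarrow> B \<subseteq> Cfun X \<and>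
     (\<forall>K. compactin X K \<longrightarrow> (\<exists>M. \<forall>f\<in>B. \<forall>x\<in>K. \<bar>f x\<bar> \<le> M))"

text \<open>The (topological) dual of C_k(X): linear functionals continuous for the compact-open
  topology, i.e. dominated by a multiple of one of the seminorms (extensional: 0 off C(X)).\<close>
definition ck_dual :: "'a topology \<Rightarrow> (('a \<Rightarrow> real) \<Rightarrow> real) set" where
  "ck_dual X = {\<phi>.
      (\<forall>f\<in>Cfun X. \<forall>g\<in>Cfun X. \<phi> (\<lambda>x. f x + g x) = \<phi> f + \<phi> g) \<and>
      (\<forall>f\<in>Cfun X. \<forall>c. \<phi> (\<lambda>x. c * f x) = c * \<phi> f) \<and>
      (\<exists>K c. compactin X K \<and>
          (\<forall>f\<in>Cfun X. \<forall>M. (\<forall>x\<in>K. \<bar>f x\<bar> \<le> M) \<longrightarrow> \<bar>\<phi> f\<bar> \<le> c * M)) \<and>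
      (\<forall>f. f \<notin> Cfun X \<longrightarrow> \<phi> f = 0)}"

text \<open>Bounded subsets of the strong dual (topology of uniform convergence on bounded
  subsets of C_k(X)).\<close>
definition strong_dual_bounded :: "'a topology \<Rightarrow> (('a \<Rightarrow> real) \<Rightarrow> real) set \<Rightarrow> bool" where
  "strong_dual_bounded X S \<longleftrightarrow> S \<subseteq> ck_dual X \<and>
     (\<forall>B. ck_bounded X B \<longrightarrow> (\<exists>M. \<forall>\<phi>\<in>S. \<forall>f\<in>B. \<bar>\<phi> f\<bar> \<le> M))"

definition b_bounding :: "'a topology \<Rightarrow> 'a set \<Rightarrow> bool" where
  "b_bounding X A \<longleftrightarrow> A \<subseteq> topspace X \<and>
     (\<forall>B. ck_bounded X B \<longrightarrow> (\<exists>M. \<forall>x\<in>A. \<forall>f\<in>B. \<bar>f x\<bar> \<le> M))"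

definition W_space :: "'a topology \<Rightarrow> bool" where
  "W_space X \<longleftrightarrow> (\<forall>A. b_bounding X A \<longrightarrow> compactin X (X closure_of A))"

text \<open>Resolutions indexed by N^N with the pointwise order (the order on nat \<Rightarrow> nat).\<close>
definition fundamental_compact_resolution :: "'a topology \<Rightarrow> ((nat \<Rightarrow> nat) \<Rightarrow> 'a set) \<Rightarrow> bool" where
  "fundamental_compact_resolution X K \<longleftrightarrow>
     (\<forall>\<alpha>. compactin X (K \<alpha>)) \<and>
     (\<forall>\<alpha> \<beta>. \<alpha> \<le> \<beta> \<longrightarrow> K \<alpha> \<subseteq> K \<beta>) \<and>
     (\<Union>\<alpha>. K \<alpha>) = topspace X \<and>
     (\<forall>C. compactin X C \<longrightarrow> (\<exists>\<alpha>. C \<subseteq> K \<alpha>))"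

definition fundamental_bounded_resolution_strong_dual ::
  "'a topology \<Rightarrow> ((nat \<Rightarrow> nat) \<Rightarrow> (('a \<Rightarrow> real) \<Rightarrow> real) set) \<Rightarrow> bool" where
  "fundamental_bounded_resolution_strong_dual X A \<longleftrightarrow>
     (\<forall>\<alpha>. strong_dual_bounded X (A \<alpha>)) \<and>
     (\<forall>\<alpha> \<beta>. \<alpha> \<le> \<beta> \<longrightarrow> A \<alpha> \<subseteq> A \<beta>) \<and>
     (\<Union>\<alpha>. A \<alpha>) = ck_dual X \<and>
     (\<forall>S. strong_dual_bounded X S \<longrightarrow> (\<exists>\<alpha>. S \<subseteq> A \<alpha>))"

end

theory Submission
  imports Defs
begin

text \<open>
  Point evaluations embed X into the dual of C_k(X). Given a fundamental bounded resolution
  (A \<alpha>) of the strong dual, the points whose evaluations lie in A \<alpha> form a b-bounding set;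
  in a W-space its closure is compact, and these closures form a fundamental compact resolution.

  Conversely, in a W-space every strongly bounded set S of functionals is equicontinuous. Its
  support (the points each of whose neighbourhoods carries a function not annihilated by S) is
  b-bounding: otherwise a bounded sequence of functions would be blown up by S. So the support
  has compact closure K; every member of S only depends on the behaviour of f near K, and
  truncating f at a level just above its supremum on K reduces the estimate to the unit ball.
  The functionals bounded by n times the supremum over K \<beta> then form, indexed by (n, \<beta>),
  a fundamental bounded resolution.
\<close>

lemma Cfun_add: "f \<in> Cfun X \<Longrightarrow> g \<in> Cfun X \<Longrightarrow> (\<lambda>x. f x + g x) \<in> Cfun X"
  by (simp add: Cfun_def continuous_map_add)

lemma Cfun_scale: "f \<in> Cfun X \<Longrightarrow> (\<lambda>x. c * f x) \<in> Cfun X"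
  by (simp add: Cfun_def continuous_map_real_mult_left)

lemma Cfun_mult:
  "f \<in> Cfun X \<Longrightarrow> continuous_map X euclideanreal g \<Longrightarrow> (\<lambda>x. f x * g x) \<in> Cfun X"
  by (simp add: Cfun_def continuous_map_real_mult)

lemma continuous_map_bounded_on_compactin:
  assumes "compactin X C" "continuous_map X euclideanreal g"
  obtains M where "\<And>x. x \<in> C \<Longrightarrow> \<bar>g x\<bar> \<le> M"
proof -
  have "bounded (g ` C)"
    using image_compactin[OF assms] by (simp add: compact_imp_bounded)
  then show ?thesis
    using that by (force simp: bounded_iff)
qed

lemma compactin_Diff_openin:
  assumes "compactin X C" "openin X U"
  shows "compactin X (C - U)"
proof -
  have "C - U = (topspace X - U) \<inter> C"
    using compactin_subset_topspace[OF assms(1)] by blast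
  then show ?thesis
    using closed_Int_compactin[OF openin_closedin_eq[THEN iffD1, OF assms(2), THEN conjunct2] assms(1)]
    by simp
qed

lemma completely_regular_plateau:
  assumes "completely_regular_space X" "compactin X C" "openin X U" "C \<subseteq> U"
  obtains h N where "continuous_map X euclideanreal h" "openin X N" "C \<subseteq> N"
    "\<And>x. x \<in> topspace X - U \<Longrightarrow> h x = 0" "\<And>x. x \<in> N \<Longrightarrow> h x = 1"
proof -
  obtain \<psi> where \<psi>: "continuous_map X euclideanreal \<psi>"
    and \<psi>0: "\<psi> ` (topspace X - U) \<subseteq> {0}" and \<psi>2: "\<psi> ` C \<subseteq> {2}"
    using Urysohn_completely_regular_compact_closed_alt[of X C "topspace X - U" 0 2] assms
    by (auto simp: disjnt_def)
  show ?thesis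
  proof
    show "continuous_map X euclideanreal (\<lambda>x. min 1 (\<psi> x))"
      by (intro continuous_map_real_min \<psi> continuous_map_const[THEN iffD2]) simp
    show "openin X {x \<in> topspace X. \<psi> x \<in> {1<..}}"
      by (rule openin_continuous_map_preimage[OF \<psi>]) simp
    show "C \<subseteq> {x \<in> topspace X. \<psi> x \<in> {1<..}}"
      using \<psi>2 compactin_subset_topspace[OF assms(2)] by auto
  qed (use \<psi>0 in auto)
qed

lemma ck_dual_add:
  "\<phi> \<in> ck_dual X \<Longrightarrow> f \<in> Cfun X \<Longrightarrow> g \<in> Cfun X \<Longrightarrow> \<phi> (\<lambda>x. f x + g x) = \<phi> f + \<phi> g"
  by (simp add: ck_dual_def)

lemma ck_dual_scale: "\<phi> \<in> ck_dual X \<Longrightarrow> f \<in> Cfun X \<Longrightarrow> \<phi> (\<lambda>x. c * f x) = c * \<phi> f"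
  by (simp add: ck_dual_def)

definition ck_dominated :: "'a topology \<Rightarrow> 'a set \<Rightarrow> real \<Rightarrow> (('a \<Rightarrow> real) \<Rightarrow> real) \<Rightarrow> bool" where
  "ck_dominated X K c \<phi> \<longleftrightarrow> (\<forall>f\<in>Cfun X. \<forall>M\<ge>0. (\<forall>x\<in>K. \<bar>f x\<bar> \<le> M) \<longrightarrow> \<bar>\<phi> f\<bar> \<le> c * M)"

lemma ck_dominatedI:
  "(\<And>f M. f \<in> Cfun X \<Longrightarrow> 0 \<le> M \<Longrightarrow> \<forall>x\<in>K. \<bar>f x\<bar> \<le> M \<Longrightarrow> \<bar>\<phi> f\<bar> \<le> c * M)
    \<Longrightarrow> ck_dominated X K c \<phi>"
  by (simp add: ck_dominated_def)

lemma ck_dominatedD: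
  "ck_dominated X K c \<phi> \<Longrightarrow> f \<in> Cfun X \<Longrightarrow> 0 \<le> M \<Longrightarrow> \<forall>x\<in>K. \<bar>f x\<bar> \<le> M
    \<Longrightarrow> \<bar>\<phi> f\<bar> \<le> c * M"
  by (simp add: ck_dominated_def)

lemma ck_dominated_mono:
  assumes \<phi>: "ck_dominated X K c \<phi>" and "K \<subseteq> K'" "c \<le> c'"
  shows "ck_dominated X K' c' \<phi>"
proof (rule ck_dominatedI)
  fix f M assume f: "f \<in> Cfun X" and M: "0 \<le> M" and bound: "\<forall>x\<in>K'. \<bar>f x\<bar> \<le> M"
  have "\<bar>\<phi> f\<bar> \<le> c * M"
    using bound \<open>K \<subseteq> K'\<close> by (intro ck_dominatedD[OF \<phi> f M]) blast
  also have "\<dots> \<le> c' * M"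
    using \<open>c \<le> c'\<close> M by (rule mult_right_mono)
  finally show "\<bar>\<phi> f\<bar> \<le> c' * M" .
qed

lemma ck_dual_imp_dominated:
  assumes "\<phi> \<in> ck_dual X"
  obtains K c where "compactin X K" "ck_dominated X K c \<phi>"
proof -
  obtain K c where "compactin X K"
    and "\<forall>f\<in>Cfun X. \<forall>M. (\<forall>x\<in>K. \<bar>f x\<bar> \<le> M) \<longrightarrow> \<bar>\<phi> f\<bar> \<le> c * M"
    using assms unfolding ck_dual_def by blast
  then show thesis
    using that[of K c] by (simp add: ck_dominated_def)
qed

lemma strong_dual_bounded_dominated:
  assumes K: "compactin X K"
  shows "strong_dual_bounded X {\<phi> \<in> ck_dual X. ck_dominated X K c \<phi>}"
  unfolding strong_dual_bounded_def
proof (intro conjI allI impI)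
  fix B assume B: "ck_bounded X B"
  then obtain M where M: "\<forall>f\<in>B. \<forall>x\<in>K. \<bar>f x\<bar> \<le> M"
    using K by (auto simp: ck_bounded_def)
  have "\<bar>\<phi> f\<bar> \<le> c * max M 0" if \<phi>: "ck_dominated X K c \<phi>" and f: "f \<in> B" for \<phi> f
  proof (rule ck_dominatedD[OF \<phi>])
    show "f \<in> Cfun X"
      using B f by (auto simp: ck_bounded_def)
    show "\<forall>x\<in>K. \<bar>f x\<bar> \<le> max M 0"
      using M f by fastforce
  qed simp
  then show "\<exists>M. \<forall>\<phi>\<in>{\<phi> \<in> ck_dual X. ck_dominated X K c \<phi>}. \<forall>f\<in>B. \<bar>\<phi> f\<bar> \<le> M"
    by blast
qed auto

definition point_eval :: "'a topology \<Rightarrow> 'a \<Rightarrow> ('a \<Rightarrow> real) \<Rightarrow> real" where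
  "point_eval X x = (\<lambda>f. if f \<in> Cfun X then f x else 0)"

lemma point_eval_in_ck_dual: "x \<in> topspace X \<Longrightarrow> point_eval X x \<in> ck_dual X"
  unfolding ck_dual_def point_eval_def
  by (auto simp: Cfun_add Cfun_scale intro!: exI[of _ "{x}"] exI[of _ 1])

lemma point_eval_apply: "f \<in> Cfun X \<Longrightarrow> point_eval X x f = f x"
  by (simp add: point_eval_def)

lemma strong_dual_bounded_point_eval_image:
  assumes C: "compactin X C"
  shows "strong_dual_bounded X (point_eval X ` C)"
  unfolding strong_dual_bounded_def
proof (intro conjI allI impI)
  show "point_eval X ` C \<subseteq> ck_dual X"
    using compactin_subset_topspace[OF C] by (auto intro: point_eval_in_ck_dual)
  fix B assume B: "ck_bounded X B"
  then obtain M where M: "\<forall>f\<in>B. \<forall>x\<in>C. \<bar>f x\<bar> \<le> M"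
    using C by (auto simp: ck_bounded_def)
  have "\<bar>point_eval X x f\<bar> \<le> M" if "x \<in> C" "f \<in> B" for x f
    using B M that by (auto simp: ck_bounded_def point_eval_apply)
  then show "\<exists>M. \<forall>\<phi>\<in>point_eval X ` C. \<forall>f\<in>B. \<bar>\<phi> f\<bar> \<le> M"
    by blast
qed

lemma b_bounding_point_eval_preimage:
  assumes S: "strong_dual_bounded X S"
  shows "b_bounding X {x \<in> topspace X. point_eval X x \<in> S}"
  unfolding b_bounding_def
proof (intro conjI allI impI)
  fix B assume B: "ck_bounded X B"
  then obtain M where M: "\<forall>\<phi>\<in>S. \<forall>f\<in>B. \<bar>\<phi> f\<bar> \<le> M"
    using S by (auto simp: strong_dual_bounded_def)
  have "\<bar>f x\<bar> \<le> M" if "point_eval X x \<in> S" "f \<in> B" for x f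
    using B M that by (metis ck_bounded_def point_eval_apply subsetD)
  then show "\<exists>M. \<forall>x\<in>{x \<in> topspace X. point_eval X x \<in> S}. \<forall>f\<in>B. \<bar>f x\<bar> \<le> M"
    by blast
qed auto

section \<open>The support of a set of functionals\<close>

definition functional_vanishes_on :: "'a topology \<Rightarrow> (('a \<Rightarrow> real) \<Rightarrow> real) \<Rightarrow> 'a set \<Rightarrow> bool" where
  "functional_vanishes_on X \<phi> U \<longleftrightarrow> (\<forall>g\<in>Cfun X. (\<forall>x\<in>topspace X - U. g x = 0) \<longrightarrow> \<phi> g = 0)"

lemma functional_vanishes_on_compact_cover:
  fixes \<phi> :: "('a \<Rightarrow> real) \<Rightarrow> real"
  assumes X: "completely_regular_space X"
    and add: "\<And>f g. f \<in> Cfun X \<Longrightarrow> g \<in> Cfun X \<Longrightarrow> \<phi> (\<lambda>x. f x + g x) = \<phi> f + \<phi> g"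
    and K0: "\<And>f. f \<in> Cfun X \<Longrightarrow> \<forall>x\<in>K0. f x = 0 \<Longrightarrow> \<phi> f = 0"
    and F: "finite F" "\<And>U. U \<in> F \<Longrightarrow> openin X U \<and> functional_vanishes_on X \<phi> U"
    and C: "compactin X C" "C \<subseteq> \<Union>F"
    and f: "f \<in> Cfun X" "\<And>x. x \<in> K0 - C \<Longrightarrow> f x = 0"
  shows "\<phi> f = 0"
  using F C f
proof (induction F arbitrary: C f rule: finite_induct)
  case empty
  then show ?case
    by (intro K0) auto
next
  case (insert U F)
  have U: "openin X U" "functional_vanishes_on X \<phi> U"
    using insert.prems(1) by simp_all
  have F_open: "openin X (\<Union>F)"
    using insert.prems(1) by (intro openin_Union) simp
  have "C - \<Union>F \<subseteq> U"
    using insert.prems(3) by blast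
  \<comment> \<open>split f into a part supported in U and a part vanishing near the piece of C outside \<Union>F\<close>
  obtain h N where h: "continuous_map X euclideanreal h" and N: "openin X N" "C - \<Union>F \<subseteq> N"
    and h0: "\<And>x. x \<in> topspace X - U \<Longrightarrow> h x = 0" and h1: "\<And>x. x \<in> N \<Longrightarrow> h x = 1"
    by (rule completely_regular_plateau[OF X compactin_Diff_openin[OF insert.prems(2) F_open] U(1)
          \<open>C - \<Union>F \<subseteq> U\<close>]) blast
  define f1 where "f1 x = f x * h x" for x
  define f2 where "f2 x = f x * (1 - h x)" for x
  have f1: "f1 \<in> Cfun X"
    unfolding f1_def by (rule Cfun_mult[OF insert.prems(4) h])
  have f2: "f2 \<in> Cfun X"
    unfolding f2_def
    by (rule Cfun_mult[OF insert.prems(4)]) (intro continuous_map_diff h continuous_map_const[THEN iffD2], simp)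
  have "\<phi> f1 = 0"
    using U(2) f1 h0 by (simp add: functional_vanishes_on_def f1_def)
  moreover have "\<phi> f2 = 0"
  proof (rule insert.IH)
    show "compactin X (C - N)"
      by (rule compactin_Diff_openin[OF insert.prems(2) N(1)])
    show "C - N \<subseteq> \<Union>F"
      using N(2) by blast
    show "f2 x = 0" if "x \<in> K0 - (C - N)" for x
      using that h1 insert.prems(5) by (cases "x \<in> C") (auto simp: f2_def)
  qed (use f2 insert.prems(1) in auto)
  moreover have "f = (\<lambda>x. f1 x + f2 x)"
    by (auto simp: f1_def f2_def algebra_simps)
  ultimately show ?case
    using add[OF f1 f2] by simp
qed

definition dual_support :: "'a topology \<Rightarrow> (('a \<Rightarrow> real) \<Rightarrow> real) set \<Rightarrow> 'a set" where
  "dual_support X S =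
     {y \<in> topspace X. \<forall>U. openin X U \<and> y \<in> U \<longrightarrow> (\<exists>\<phi>\<in>S. \<not> functional_vanishes_on X \<phi> U)}"

lemma dual_support_subset_topspace: "dual_support X S \<subseteq> topspace X"
  by (auto simp: dual_support_def)

lemma dual_support_mono: "S \<subseteq> T \<Longrightarrow> dual_support X S \<subseteq> dual_support X T"
  unfolding dual_support_def by blast

lemma ck_dual_vanishes_off_support:
  assumes X: "completely_regular_space X" and \<phi>: "\<phi> \<in> ck_dual X"
    and V: "openin X V" "dual_support X {\<phi>} \<subseteq> V"
    and f: "f \<in> Cfun X" "\<And>x. x \<in> V \<Longrightarrow> f x = 0"
  shows "\<phi> f = 0"
proof -
  obtain K0 c where K0: "compactin X K0" and dom: "ck_dominated X K0 c \<phi>"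
    using ck_dual_imp_dominated[OF \<phi>] by blast
  have K0_null: "\<phi> g = 0" if "g \<in> Cfun X" "\<forall>x\<in>K0. g x = 0" for g
    using ck_dominatedD[OF dom that(1), of 0] that(2) by simp
  define \<U> where "\<U> = {U. openin X U \<and> functional_vanishes_on X \<phi> U}"
  have "K0 - V \<subseteq> \<Union>\<U>"
    using V(2) compactin_subset_topspace[OF K0] by (auto simp: \<U>_def dual_support_def)
  then obtain F where F: "finite F" "F \<subseteq> \<U>" "K0 - V \<subseteq> \<Union>F"
    using compactinD[OF compactin_Diff_openin[OF K0 V(1)], of \<U>] by (auto simp: \<U>_def)
  show ?thesis
  proof (rule functional_vanishes_on_compact_cover[OF X ck_dual_add[OF \<phi>] K0_null F(1) _
        compactin_Diff_openin[OF K0 V(1)] F(3) f(1)])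
    show "openin X U \<and> functional_vanishes_on X \<phi> U" if "U \<in> F" for U
      using that F(2) by (auto simp: \<U>_def)
    show "f x = 0" if "x \<in> K0 - (K0 - V)" for x
      using that f(2) by blast
  qed
qed

lemma ck_bounded_range_eventually_zero:
  fixes h :: "nat \<Rightarrow> 'a \<Rightarrow> real"
  assumes h: "\<And>n. h n \<in> Cfun X"
    and zero: "\<And>C. compactin X C \<Longrightarrow> \<exists>N. \<forall>n\<ge>N. \<forall>x\<in>C. h n x = 0"
  shows "ck_bounded X (range h)"
  unfolding ck_bounded_def
proof (intro conjI allI impI)
  show "range h \<subseteq> Cfun X"
    using h by blast
  fix C assume C: "compactin X C"
  obtain N where N: "\<forall>n\<ge>N. \<forall>x\<in>C. h n x = 0"
    using zero[OF C] by blast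
  have "\<exists>M. \<forall>x\<in>C. \<bar>h n x\<bar> \<le> M" for n
  proof -
    have "continuous_map X euclideanreal (h n)"
      using h by (simp add: Cfun_def)
    then obtain M where "\<And>x. x \<in> C \<Longrightarrow> \<bar>h n x\<bar> \<le> M"
      by (rule continuous_map_bounded_on_compactin[OF C]) blast
    then show ?thesis
      by blast
  qed
  then obtain M where M: "\<And>n x. x \<in> C \<Longrightarrow> \<bar>h n x\<bar> \<le> M n"
    by metis
  have "\<bar>h n x\<bar> \<le> (\<Sum>k<N. \<bar>M k\<bar>)" if x: "x \<in> C" for n x
  proof (cases "n < N")
    case True
    have "\<bar>M n\<bar> \<le> (\<Sum>k<N. \<bar>M k\<bar>)"
      by (rule member_le_sum) (use True in simp_all)
    then show ?thesis
      using M[OF x, of n] by linarith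
  next
    case False
    then show ?thesis
      using N x by (simp add: sum_nonneg)
  qed
  then show "\<exists>M. \<forall>f\<in>range h. \<forall>x\<in>C. \<bar>f x\<bar> \<le> M"
    by blast
qed

lemma ck_bounded_range_vanishing_below:
  fixes f g :: "nat \<Rightarrow> 'a \<Rightarrow> real"
  assumes B: "ck_bounded X B" and f: "\<And>n. f n \<in> B" and g: "\<And>n. g n \<in> Cfun X"
    and g_zero: "\<And>n x. x \<in> topspace X \<Longrightarrow> \<bar>f n x\<bar> \<le> real n \<Longrightarrow> g n x = 0"
  shows "ck_bounded X (range g)"
proof (rule ck_bounded_range_eventually_zero[OF g])
  fix C assume C: "compactin X C"
  then obtain M where M: "\<forall>h\<in>B. \<forall>x\<in>C. \<bar>h x\<bar> \<le> M"
    using B by (auto simp: ck_bounded_def)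
  have "g n x = 0" if "nat \<lceil>M\<rceil> \<le> n" "x \<in> C" for n x
  proof (rule g_zero)
    show "x \<in> topspace X"
      using compactin_subset_topspace[OF C] that(2) by blast
    have "\<bar>f n x\<bar> \<le> M"
      using M f that(2) by blast
    also have "M \<le> real n"
      using that(1) by linarith
    finally show "\<bar>f n x\<bar> \<le> real n" .
  qed
  then show "\<exists>N. \<forall>n\<ge>N. \<forall>x\<in>C. g n x = 0"
    by blast
qed

lemma dual_support_witness:
  assumes y: "y \<in> dual_support X S" and S: "S \<subseteq> ck_dual X" and U: "openin X U" "y \<in> U"
  obtains \<phi> g where "\<phi> \<in> S" "g \<in> Cfun X" "\<And>x. x \<in> topspace X - U \<Longrightarrow> g x = 0" "\<phi> g = 1"
proof -
  obtain \<phi> g where \<phi>: "\<phi> \<in> S" and g: "g \<in> Cfun X" and g_zero: "\<forall>x\<in>topspace X - U. g x = 0"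
    and nonzero: "\<phi> g \<noteq> 0"
    using y U unfolding dual_support_def functional_vanishes_on_def by blast
  define g' where "g' = (\<lambda>x. (1 / \<phi> g) * g x)"
  show thesis
  proof (rule that[OF \<phi>])
    show "g' \<in> Cfun X"
      unfolding g'_def by (rule Cfun_scale[OF g])
    show "g' x = 0" if "x \<in> topspace X - U" for x
      using g_zero that by (simp add: g'_def)
    show "\<phi> g' = 1"
      using ck_dual_scale[of \<phi> X g "1 / \<phi> g"] \<phi> S g nonzero by (simp add: g'_def subsetD)
  qed
qed

lemma b_bounding_dual_support:
  assumes S: "strong_dual_bounded X S"
  shows "b_bounding X (dual_support X S)"
  unfolding b_bounding_def
proof (intro conjI allI impI)
  show "dual_support X S \<subseteq> topspace X"
    by (rule dual_support_subset_topspace)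
  have S_dual: "S \<subseteq> ck_dual X"
    using S by (simp add: strong_dual_bounded_def)
  fix B assume B: "ck_bounded X B"
  show "\<exists>M. \<forall>x\<in>dual_support X S. \<forall>f\<in>B. \<bar>f x\<bar> \<le> M"
  proof (rule ccontr)
    assume "\<nexists>M. \<forall>x\<in>dual_support X S. \<forall>f\<in>B. \<bar>f x\<bar> \<le> M"
    then have "\<forall>n::nat. \<exists>x f. x \<in> dual_support X S \<and> f \<in> B \<and> real n < \<bar>f x\<bar>"
      by (meson not_le)
    then obtain xs fs where xs: "\<And>n. xs n \<in> dual_support X S" and fs: "\<And>n. fs n \<in> B"
      and big: "\<And>n. real n < \<bar>fs n (xs n)\<bar>"
      by metis
    \<comment> \<open>near xs n, where fs n exceeds n, some member of S sees a function g with value 1;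
      the functions n * g are bounded in C_k(X), yet S takes the value n on them\<close>
    define U where "U n = {x \<in> topspace X. \<bar>fs n x\<bar> \<in> {real n<..}}" for n
    have "\<exists>\<phi> g. \<phi> \<in> S \<and> g \<in> Cfun X \<and> (\<forall>x\<in>topspace X - U n. g x = 0) \<and> \<phi> g = 1" for n
    proof (rule dual_support_witness[OF xs S_dual])
      have "continuous_map X euclideanreal (fs n)"
        using B fs by (auto simp: ck_bounded_def Cfun_def)
      then show "openin X (U n)"
        unfolding U_def by (intro openin_continuous_map_preimage[OF continuous_map_real_abs]) simp_all
      show "xs n \<in> U n"
        using xs big dual_support_subset_topspace by (fastforce simp: U_def)
    qed blast
    then obtain \<phi>s gs where \<phi>s: "\<And>n. \<phi>s n \<in> S" and gs: "\<And>n. gs n \<in> Cfun X"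
      and gs_zero: "\<And>n x. x \<in> topspace X - U n \<Longrightarrow> gs n x = 0" and gs_one: "\<And>n. \<phi>s n (gs n) = 1"
      by metis
    define h where "h n = (\<lambda>x. real n * gs n x)" for n
    have "ck_bounded X (range h)"
      using B fs Cfun_scale[OF gs] gs_zero
      by (intro ck_bounded_range_vanishing_below[of X B fs]) (auto simp: h_def U_def)
    then obtain M where "\<forall>\<phi>\<in>S. \<forall>f\<in>range h. \<bar>\<phi> f\<bar> \<le> M"
      using S by (auto simp: strong_dual_bounded_def)
    moreover have "\<phi>s n (h n) = real n" for n
      using ck_dual_scale[of "\<phi>s n" X "gs n" "real n"] \<phi>s S_dual gs gs_one by (auto simp: h_def)
    ultimately have "real n \<le> M" for n
      using \<phi>s by (metis rangeI abs_of_nat)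
    then show False
      using reals_Archimedean2[of M] by (auto simp: not_less[symmetric])
  qed
qed

section \<open>Strongly bounded sets are equicontinuous\<close>

lemma ck_dual_bound_by_truncation:
  assumes \<phi>: "\<phi> \<in> ck_dual X" and K: "K \<subseteq> topspace X"
    and near: "\<And>g V. g \<in> Cfun X \<Longrightarrow> openin X V \<Longrightarrow> K \<subseteq> V \<Longrightarrow> \<forall>x\<in>V. g x = 0 \<Longrightarrow> \<phi> g = 0"
    and unit: "\<And>g. g \<in> Cfun X \<Longrightarrow> \<forall>x. \<bar>g x\<bar> \<le> 1 \<Longrightarrow> \<bar>\<phi> g\<bar> \<le> N"
    and f: "f \<in> Cfun X" "\<And>x. x \<in> K \<Longrightarrow> \<bar>f x\<bar> < e" and e: "0 < e"
  shows "\<bar>\<phi> f\<bar> \<le> N * e"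
proof -
  \<comment> \<open>f agrees near K with its truncation at level e, which lies in e times the unit ball\<close>
  have f_cont: "continuous_map X euclideanreal f"
    using f(1) by (simp add: Cfun_def)
  define t where "t x = max (- e) (min e (f x))" for x
  define g where "g x = t x / e" for x
  define d where "d x = f x - t x" for x
  have t_cont: "continuous_map X euclideanreal t"
    unfolding t_def
    by (intro continuous_map_real_max continuous_map_real_min f_cont continuous_map_const[THEN iffD2]) simp_all
  have t: "t \<in> Cfun X"
    using t_cont f(1) e by (simp add: Cfun_def t_def)
  have g: "g \<in> Cfun X"
    using Cfun_scale[OF t, of "1 / e"] by (simp add: g_def[abs_def])
  have d: "d \<in> Cfun X"
    using continuous_map_diff[OF f_cont t_cont] f(1) t by (simp add: Cfun_def d_def[abs_def])
  have "\<bar>g x\<bar> \<le> 1" for x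
  proof -
    have "\<bar>t x\<bar> \<le> e"
      using e by (simp add: t_def abs_le_iff)
    moreover have "\<bar>g x\<bar> = \<bar>t x\<bar> / e"
      using e by (simp add: g_def abs_divide)
    ultimately show ?thesis
      using e by simp
  qed
  moreover have "t = (\<lambda>x. e * g x)"
    using e by (simp add: g_def)
  ultimately have "\<bar>\<phi> t\<bar> \<le> e * N"
    using unit[OF g] e ck_dual_scale[OF \<phi> g, of e] by (simp add: abs_mult)
  moreover have "\<phi> d = 0"
  proof (rule near[OF d])
    show "openin X {x \<in> topspace X. \<bar>f x\<bar> \<in> {..<e}}"
      by (intro openin_continuous_map_preimage[OF continuous_map_real_abs[OF f_cont]]) simp_all
    show "K \<subseteq> {x \<in> topspace X. \<bar>f x\<bar> \<in> {..<e}}"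
      using K f(2) by auto
    show "\<forall>x\<in>{x \<in> topspace X. \<bar>f x\<bar> \<in> {..<e}}. d x = 0"
      by (auto simp: d_def t_def abs_less_iff min_def max_def)
  qed
  moreover have "\<phi> f = \<phi> t + \<phi> d"
    using ck_dual_add[OF \<phi> t d] by (simp add: d_def)
  ultimately show ?thesis
    by (simp add: mult.commute)
qed

lemma ck_dominated_if_unit_ball_bounded:
  assumes \<phi>: "\<phi> \<in> ck_dual X" and K: "K \<subseteq> topspace X"
    and near: "\<And>g V. g \<in> Cfun X \<Longrightarrow> openin X V \<Longrightarrow> K \<subseteq> V \<Longrightarrow> \<forall>x\<in>V. g x = 0 \<Longrightarrow> \<phi> g = 0"
    and unit: "\<And>g. g \<in> Cfun X \<Longrightarrow> \<forall>x. \<bar>g x\<bar> \<le> 1 \<Longrightarrow> \<bar>\<phi> g\<bar> \<le> N"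
  shows "ck_dominated X K N \<phi>"
proof (rule ck_dominatedI)
  fix f M assume f: "f \<in> Cfun X" "0 \<le> M" "\<forall>x\<in>K. \<bar>f x\<bar> \<le> M"
  have N: "0 \<le> N"
    using unit[of "\<lambda>x. 0"] by (simp add: Cfun_def)
  have truncated: "\<bar>\<phi> f\<bar> \<le> N * e" if "M < e" for e
    using f that by (intro ck_dual_bound_by_truncation[OF \<phi> K near unit]) fastforce+
  show "\<bar>\<phi> f\<bar> \<le> N * M"
  proof (cases "N = 0")
    case True
    then show ?thesis
      using truncated[of "M + 1"] by simp
  next
    case False
    with N have N_pos: "0 < N"
      by simp
    have "\<bar>\<phi> f\<bar> / N \<le> M"
    proof (rule dense_ge)
      fix e assume "M < e"
      then show "\<bar>\<phi> f\<bar> / N \<le> e"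
        using truncated[of e] N_pos by (simp add: pos_divide_le_eq mult.commute)
    qed
    then show ?thesis
      using N_pos by (simp add: pos_divide_le_eq mult.commute)
  qed
qed

theorem strong_dual_bounded_imp_equicontinuous:
  assumes X: "completely_regular_space X" and W: "W_space X" and S: "strong_dual_bounded X S"
  obtains K c where "compactin X K" "\<And>\<phi>. \<phi> \<in> S \<Longrightarrow> ck_dominated X K c \<phi>"
proof -
  define K where "K = X closure_of dual_support X S"
  have K: "compactin X K"
    using W b_bounding_dual_support[OF S] by (simp add: W_space_def K_def)
  define B where "B = {g \<in> Cfun X. \<forall>x. \<bar>g x\<bar> \<le> 1}"
  have "ck_bounded X B"
    by (auto simp: ck_bounded_def B_def)
  then obtain N where N: "\<forall>\<phi>\<in>S. \<forall>g\<in>B. \<bar>\<phi> g\<bar> \<le> N"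
    using S by (auto simp: strong_dual_bounded_def)
  have "ck_dominated X K N \<phi>" if \<phi>: "\<phi> \<in> S" for \<phi>
  proof -
    have \<phi>_dual: "\<phi> \<in> ck_dual X"
      using \<phi> S by (auto simp: strong_dual_bounded_def)
    have "dual_support X {\<phi>} \<subseteq> dual_support X S"
      using \<phi> by (intro dual_support_mono) simp
    also have "\<dots> \<subseteq> K"
      unfolding K_def by (rule closure_of_subset[OF dual_support_subset_topspace])
    finally have supp: "dual_support X {\<phi>} \<subseteq> K" .
    have near: "\<phi> g = 0"
      if "g \<in> Cfun X" "openin X V" "K \<subseteq> V" "\<forall>x\<in>V. g x = 0" for g V
      using that(4)
      by (intro ck_dual_vanishes_off_support[OF X \<phi>_dual that(2) order_trans[OF supp that(3)] that(1)])
         blast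
    show ?thesis
      using N \<phi>
      by (intro ck_dominated_if_unit_ball_bounded[OF \<phi>_dual compactin_subset_topspace[OF K] near])
         (auto simp: B_def)
  qed
  then show thesis
    using that[OF K] by blast
qed

lemma fundamental_bounded_resolution_strong_dualD:
  assumes "fundamental_bounded_resolution_strong_dual X A"
  shows "strong_dual_bounded X (A \<alpha>)"
    and "\<alpha> \<le> \<beta> \<Longrightarrow> A \<alpha> \<subseteq> A \<beta>"
    and "(\<Union>\<alpha>. A \<alpha>) = ck_dual X"
    and "strong_dual_bounded X S \<Longrightarrow> \<exists>\<alpha>. S \<subseteq> A \<alpha>"
  using assms unfolding fundamental_bounded_resolution_strong_dual_def by simp_all

lemma fundamental_compact_resolution_if_dual_resolution:
  assumes W: "W_space X" and A: "fundamental_bounded_resolution_strong_dual X A"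
  shows "\<exists>K. fundamental_compact_resolution X K"
proof -
  note A = fundamental_bounded_resolution_strong_dualD[OF A]
  define P where "P \<alpha> = {x \<in> topspace X. point_eval X x \<in> A \<alpha>}" for \<alpha>
  define K where "K \<alpha> = X closure_of P \<alpha>" for \<alpha>
  have P_K: "P \<alpha> \<subseteq> K \<alpha>" for \<alpha>
    unfolding K_def by (rule closure_of_subset) (auto simp: P_def)
  have "compactin X (K \<alpha>)" for \<alpha>
    using W b_bounding_point_eval_preimage[OF A(1)]
    unfolding K_def P_def W_space_def by blast
  moreover have "K \<alpha> \<subseteq> K \<beta>" if "\<alpha> \<le> \<beta>" for \<alpha> \<beta>
    unfolding K_def P_def using A(2)[OF that] by (intro closure_of_mono) blast
  moreover have "(\<Union>\<alpha>. K \<alpha>) = topspace X"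
  proof
    show "(\<Union>\<alpha>. K \<alpha>) \<subseteq> topspace X"
      unfolding K_def by (intro UN_least closure_of_subset_topspace)
    show "topspace X \<subseteq> (\<Union>\<alpha>. K \<alpha>)"
    proof
      fix x assume x: "x \<in> topspace X"
      then obtain \<alpha> where "point_eval X x \<in> A \<alpha>"
        using point_eval_in_ck_dual A(3) by (metis UN_E)
      then show "x \<in> (\<Union>\<alpha>. K \<alpha>)"
        using x P_K by (auto simp: P_def)
    qed
  qed
  moreover have "\<exists>\<alpha>. C \<subseteq> K \<alpha>" if C: "compactin X C" for C
  proof -
    obtain \<alpha> where "point_eval X ` C \<subseteq> A \<alpha>"
      using A(4)[OF strong_dual_bounded_point_eval_image[OF C]] by blast
    then have "C \<subseteq> P \<alpha>"
      using compactin_subset_topspace[OF C] by (auto simp: P_def)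
    then show ?thesis
      using P_K by blast
  qed
  ultimately show ?thesis
    unfolding fundamental_compact_resolution_def by blast
qed

lemma fundamental_compact_resolutionD:
  assumes "fundamental_compact_resolution X K"
  shows "compactin X (K \<alpha>)"
    and "\<alpha> \<le> \<beta> \<Longrightarrow> K \<alpha> \<subseteq> K \<beta>"
    and "compactin X C \<Longrightarrow> \<exists>\<alpha>. C \<subseteq> K \<alpha>"
  using assms unfolding fundamental_compact_resolution_def by simp_all

lemma dual_resolution_if_fundamental_compact_resolution:
  assumes X: "completely_regular_space X" and W: "W_space X"
    and K: "fundamental_compact_resolution X K"
  shows "\<exists>A. fundamental_bounded_resolution_strong_dual X A"
proof -
  note K = fundamental_compact_resolutionD[OF K]
  \<comment> \<open>the head of \<alpha> bounds the constant, the tail selects the compact set\<close>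
  define A where "A \<alpha> = {\<phi> \<in> ck_dual X. ck_dominated X (K (\<lambda>n. \<alpha> (Suc n))) (\<alpha> 0) \<phi>}" for \<alpha>
  have absorb: "\<exists>\<alpha>. S \<subseteq> A \<alpha>"
    if S: "S \<subseteq> ck_dual X" and C: "compactin X C" and dom: "\<And>\<phi>. \<phi> \<in> S \<Longrightarrow> ck_dominated X C c \<phi>"
    for S C c
  proof -
    obtain \<beta> where "C \<subseteq> K \<beta>"
      using K(3)[OF C] by blast
    then have "S \<subseteq> A (case_nat (nat \<lceil>c\<rceil>) \<beta>)"
      using S dom real_nat_ceiling_ge[of c] by (auto simp: A_def intro: ck_dominated_mono)
    then show ?thesis
      by blast
  qed
  have "strong_dual_bounded X (A \<alpha>)" for \<alpha>
    unfolding A_def by (rule strong_dual_bounded_dominated[OF K(1)])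
  moreover have "A \<alpha> \<subseteq> A \<beta>" if "\<alpha> \<le> \<beta>" for \<alpha> \<beta>
  proof -
    have "K (\<lambda>n. \<alpha> (Suc n)) \<subseteq> K (\<lambda>n. \<beta> (Suc n))"
      using that by (intro K(2)) (simp add: le_fun_def)
    moreover have "real (\<alpha> 0) \<le> real (\<beta> 0)"
      using that by (simp add: le_fun_def)
    ultimately show ?thesis
      by (auto simp: A_def intro: ck_dominated_mono)
  qed
  moreover have "(\<Union>\<alpha>. A \<alpha>) = ck_dual X"
  proof
    show "(\<Union>\<alpha>. A \<alpha>) \<subseteq> ck_dual X"
      by (auto simp: A_def)
    show "ck_dual X \<subseteq> (\<Union>\<alpha>. A \<alpha>)"
    proof
      fix \<phi> assume \<phi>: "\<phi> \<in> ck_dual X"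
      then obtain C c where "compactin X C" "ck_dominated X C c \<phi>"
        by (rule ck_dual_imp_dominated)
      then obtain \<alpha> where "{\<phi>} \<subseteq> A \<alpha>"
        using absorb[of "{\<phi>}" C c] \<phi> by blast
      then show "\<phi> \<in> (\<Union>\<alpha>. A \<alpha>)"
        by blast
    qed
  qed
  moreover have "\<exists>\<alpha>. S \<subseteq> A \<alpha>" if S: "strong_dual_bounded X S" for S
  proof -
    obtain C c where C: "compactin X C" and dom: "\<And>\<phi>. \<phi> \<in> S \<Longrightarrow> ck_dominated X C c \<phi>"
      by (rule strong_dual_bounded_imp_equicontinuous[OF X W S]) blast
    show ?thesis
      by (rule absorb[OF _ C dom]) (use S in \<open>simp add: strong_dual_bounded_def\<close>)
  qed
  ultimately show ?thesis
    unfolding fundamental_bounded_resolution_strong_dual_def by blast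
qed

theorem corollary2p10:
  fixes X :: "'a topology"
  assumes "tychonoff_space X" and "W_space X"
  shows "(\<exists>A. fundamental_bounded_resolution_strong_dual X A) \<longleftrightarrow>
         (\<exists>K. fundamental_compact_resolution X K)"
proof
  assume "\<exists>A. fundamental_bounded_resolution_strong_dual X A"
  then show "\<exists>K. fundamental_compact_resolution X K"
    using fundamental_compact_resolution_if_dual_resolution[OF assms(2)] by blast
next
  assume "\<exists>K. fundamental_compact_resolution X K"
  moreover have "completely_regular_space X"
    using assms(1) by (simp add: tychonoff_space_def)
  ultimately show "\<exists>A. fundamental_bounded_resolution_strong_dual X A"
    using dual_resolution_if_fundamental_compact_resolution[OF _ assms(2)] by blast
qed

end
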